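(* Let $L\geq 1$ be an integer and define, for $\beta\in(0,1)$, $$f(\beta)=\frac{(1-\beta^{2L})^2}{L^2\beta^{2L}(1-\beta^2)}.$$ Then $f$ is strictly decreasing on $(0,1)$.
   Context: $L$ is the number of users of a broadcast channel; $f(\beta)$ is the limit $\lim_{N\to\infty}\|\mathbf{F}\|_F^2/N$ of the normalized squared Frobenius norm of the base encoding matrix of the scheme, but the claim is purely about the displayed real function. *)

theory Defs
  imports Complex_Main
begin

definition f_beta :: "nat \<Rightarrow> real \<Rightarrow> real" where
  "f_beta L \<beta> = (1 - \<beta> ^ (2*L))^2 / ((real L)^2 * \<beta> ^ (2*L) * (1 - \<beta>^2))"

end

theory Submission
  imports Defs
begin

text \<open>With \<open>t = \<beta>\<^sup>2\<close>, splitting \<open>(1 - t^L)\<^sup>2 / (t^L (1 - t))\<close> into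
  \<open>(1 - t^L)/(1 - t)\<close> times \<open>(1 - t^L)/t^L\<close> and expanding the geometric sum turns
  \<open>L\<^sup>2 f(\<beta>)\<close> into the sum over \<open>k < L\<close> of \<open>1/t^(L-k) - t^k\<close>, a sum of terms that
  are each strictly decreasing in \<open>t > 0\<close>.\<close>

lemma geometric_gap_sum:
  fixes t :: "'a::field"
  assumes "t \<noteq> 0" "t \<noteq> 1"
  shows "(1 - t ^ n)\<^sup>2 / (t ^ n * (1 - t)) = (\<Sum>k<n. 1 / t ^ (n - k) - t ^ k)"
proof -
  have "1 / t ^ (n - k) - t ^ k = t ^ k * ((1 - t ^ n) / t ^ n)" if "k < n" for k
  proof -
    have "t ^ n = t ^ k * t ^ (n - k)"
      using that by (simp add: power_add[symmetric])
    then show ?thesis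
      using assms by (simp add: field_simps)
  qed
  then have "(\<Sum>k<n. 1 / t ^ (n - k) - t ^ k) = (\<Sum>k<n. t ^ k * ((1 - t ^ n) / t ^ n))"
    by (intro sum.cong) auto
  also have "\<dots> = (\<Sum>k<n. t ^ k) * ((1 - t ^ n) / t ^ n)"
    by (rule sum_distrib_right[symmetric])
  also have "\<dots> = (1 - t ^ n) / (1 - t) * ((1 - t ^ n) / t ^ n)"
    using assms by (simp add: sum_gp_strict)
  also have "\<dots> = (1 - t ^ n)\<^sup>2 / (t ^ n * (1 - t))"
    by (simp add: power2_eq_square)
  finally show ?thesis
    by simp
qed

lemma geometric_gap_sum_strict_antimono:
  fixes s t :: real
  assumes "0 < s" "s < t" "n \<ge> 1"
  shows "(\<Sum>k<n. 1 / t ^ (n - k) - t ^ k) < (\<Sum>k<n. 1 / s ^ (n - k) - s ^ k)"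
proof (rule sum_strict_mono)
  show "{..<n} \<noteq> {}"
    using assms(3) by (simp add: lessThan_empty_iff)
next
  fix k assume "k \<in> {..<n}"
  then have "s ^ (n - k) < t ^ (n - k)"
    using assms(1,2) by (intro power_strict_mono) auto
  then have "1 / t ^ (n - k) < 1 / s ^ (n - k)"
    using assms(1,2) by (intro divide_strict_left_mono) auto
  moreover have "s ^ k \<le> t ^ k"
    using assms(1,2) by (intro power_mono) auto
  ultimately show "1 / t ^ (n - k) - t ^ k < 1 / s ^ (n - k) - s ^ k"
    by linarith
qed simp

lemma f_beta_eq_geometric_gap_sum:
  assumes "0 < \<beta>" "\<beta> \<noteq> 1"
  shows "f_beta L \<beta> = (\<Sum>k<L. 1 / (\<beta>\<^sup>2) ^ (L - k) - (\<beta>\<^sup>2) ^ k) / (real L)\<^sup>2"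
proof -
  have "\<beta>\<^sup>2 \<noteq> 1"
    using assms by (simp add: power2_eq_1_iff)
  moreover have "f_beta L \<beta> = (1 - (\<beta>\<^sup>2) ^ L)\<^sup>2 / ((\<beta>\<^sup>2) ^ L * (1 - \<beta>\<^sup>2)) / (real L)\<^sup>2"
    unfolding f_beta_def power_mult[symmetric] by (simp add: mult_ac)
  ultimately show ?thesis
    using assms(1) by (simp add: geometric_gap_sum)
qed

theorem lemma1:
  fixes L :: nat
  assumes "L \<ge> 1"
  shows "\<forall>x\<in>{0<..<1::real}. \<forall>y\<in>{0<..<1::real}. x < y \<longrightarrow> f_beta L y < f_beta L x"
proof (intro ballI impI)
  fix x y :: real
  assume x: "x \<in> {0<..<1}" and y: "y \<in> {0<..<1}" and "x < y"
  then have "0 < x\<^sup>2" "x\<^sup>2 < y\<^sup>2"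
    by (auto intro: power_strict_mono)
  then have "(\<Sum>k<L. 1 / (y\<^sup>2) ^ (L - k) - (y\<^sup>2) ^ k) < (\<Sum>k<L. 1 / (x\<^sup>2) ^ (L - k) - (x\<^sup>2) ^ k)"
    using assms by (rule geometric_gap_sum_strict_antimono)
  moreover have "(real L)\<^sup>2 > 0"
    using assms by simp
  ultimately show "f_beta L y < f_beta L x"
    using x y by (simp add: f_beta_eq_geometric_gap_sum divide_strict_right_mono)
qed

end
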